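(* Let $\mathcal{P}\subset K[x_1,\ldots,x_n]$ be a chordal polynomial set with $x_1<\cdots<x_n$ as a perfect elimination ordering. For each $i=1,\ldots,n$ with $\mathcal{P}^{(i)}\neq\emptyset$, let $T_i\in K[x_1,\ldots,x_n]$ be a polynomial with $\mathrm{lv}(T_i)=x_i$ and $\mathrm{supp}(T_i)\subseteq \mathrm{supp}(\mathcal{P}^{(i)})$. For $i$ with $\mathcal{P}^{(i)}=\emptyset$, $T_i$ is absent. Then $\mathcal{T}=[T_1,\ldots,T_n]$, with the absent entries omitted, is a triangular set and $G(\mathcal{T})\subseteq G(\mathcal{P})$. Moreover, if $\mathrm{supp}(T_i)=\mathrm{supp}(\mathcal{P}^{(i)})$ for every $i$ with $\mathcal{P}^{(i)}\neq\emptyset$, then $G(\mathcal{T})=G(\mathcal{P})$.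
   Context: Let $K$ be a field and $K[x_1,\ldots,x_n]$ the polynomial ring, with the variables ordered $x_1<\cdots<x_n$. For a polynomial $F$, $\mathrm{supp}(F)$ is the set of variables effectively appearing in $F$. For a set of polynomials $\mathcal{P}$, $\mathrm{supp}(\mathcal{P})=\bigcup_{F\in\mathcal{P}}\mathrm{supp}(F)$. For a nonconstant $F$, $\mathrm{lv}(F)$ is the greatest variable in $\mathrm{supp}(F)$. For a polynomial set $\mathcal{P}$ and $1\le i\le n$, $\mathcal{P}^{(i)}=\{P\in\mathcal{P}:\mathrm{lv}(P)=x_i\}$; constants belong to no $\mathcal{P}^{(i)}$. The associated graph $G(\mathcal{P})$ is the undirected graph whose vertex set is $\mathrm{supp}(\mathcal{P})$, with an edge between distinct $x_i,x_j$ iff some $F\in\mathcal{P}$ has $x_i,x_j\in\mathrm{supp}(F)$. For graphs, $G\subseteq G'$ means that $G$ is a subgraph of $G'$, i.e. both the vertex set and the edge set are contained. An ordering of the vertices of a graph is a perfect elimination ordering if, for every vertex $v$, the set consisting of $v$ and all neighbours of $v$ smaller than $v$ is a clique. A polynomial set $\mathcal{P}$ is called chordal with $x_1<\cdots<x_n$ as a perfect elimination ordering if the restriction of this ordering to $\mathrm{supp}(\mathcal{P})$ is a perfect elimination ordering of $G(\mathcal{P})$. A triangular set is an ordered set $[T_1,\ldots,T_r]$ of nonconstant polynomials with $\mathrm{lv}(T_1)<\cdots<\mathrm{lv}(T_r)$. *)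

theory Defs
  imports "HOL-Library.Poly_Mapping"
begin

text \<open>Multivariate polynomials over K: finitely supported maps from monomials
(exponent vectors, finitely supported maps from variable indices to exponents)
to coefficients. Variable x_i is represented by the index i :: nat; the variable
ordering x_1 < ... < x_n is the order on nat.\<close>

type_synonym 'a mpoly = "(nat \<Rightarrow>\<^sub>0 nat) \<Rightarrow>\<^sub>0 'a"

definition vars :: "'a::zero mpoly \<Rightarrow> nat set" where
  "vars F = (\<Union>m \<in> Poly_Mapping.keys F. Poly_Mapping.keys m)"

definition supp_set :: "'a::zero mpoly set \<Rightarrow> nat set" where
  "supp_set P = \<Union> (vars ` P)"

definition nonconstant :: "'a::zero mpoly \<Rightarrow> bool" where
  "nonconstant F \<longleftrightarrow> vars F \<noteq> {}"

text \<open>Leading variable: greatest variable in supp(F) (meaningful for nonconstant F).\<close>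
definition lv :: "'a::zero mpoly \<Rightarrow> nat" where
  "lv F = Max (vars F)"

definition level_set :: "'a::zero mpoly set \<Rightarrow> nat \<Rightarrow> 'a mpoly set" where
  "level_set P i = {F \<in> P. nonconstant F \<and> lv F = i}"

text \<open>Undirected graphs as (vertex set, set of edges), edges being 2-element sets.\<close>
type_synonym graph = "nat set \<times> nat set set"

definition assoc_graph :: "'a::zero mpoly set \<Rightarrow> graph" where
  "assoc_graph P = (supp_set P,
     {{i, j} | i j. i \<noteq> j \<and> (\<exists>F \<in> P. i \<in> vars F \<and> j \<in> vars F)})"

definition subgraph :: "graph \<Rightarrow> graph \<Rightarrow> bool" where
  "subgraph G G' \<longleftrightarrow> fst G \<subseteq> fst G' \<and> snd G \<subseteq> snd G'"

definition is_clique :: "graph \<Rightarrow> nat set \<Rightarrow> bool" where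
  "is_clique G S \<longleftrightarrow> (\<forall>a \<in> S. \<forall>b \<in> S. a \<noteq> b \<longrightarrow> {a, b} \<in> snd G)"

definition is_peo :: "graph \<Rightarrow> bool" where
  "is_peo G \<longleftrightarrow> (\<forall>v \<in> fst G. is_clique G ({v} \<union> {u \<in> fst G. {u, v} \<in> snd G \<and> u < v}))"

definition chordal_peo :: "'a::zero mpoly set \<Rightarrow> bool" where
  "chordal_peo P \<longleftrightarrow> is_peo (assoc_graph P)"

definition triangular_set :: "'a::zero mpoly list \<Rightarrow> bool" where
  "triangular_set Ts \<longleftrightarrow> (\<forall>T \<in> set Ts. nonconstant T) \<and> sorted_wrt (\<lambda>S T. lv S < lv T) Ts"

end

theory Submission
  imports Defs
begin

text \<open>Every polynomial of level i contains x_i and otherwise only smaller variables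
adjacent to x_i, so supp(P^(i)) lies in the clique that the perfect elimination ordering
attaches to x_i. Hence any T_i supported there creates no new vertices or edges, and the
triangular shape is immediate from lv(T_i) = x_i. If supp(T_i) = supp(P^(i)), every
nonconstant F in P has its support inside that of T_(lv F), giving the reverse inclusion.\<close>

lemma finite_vars: "finite (vars F)"
  unfolding vars_def by auto

lemma lv_in_vars: "nonconstant F \<Longrightarrow> lv F \<in> vars F"
  unfolding lv_def nonconstant_def using finite_vars Max_in by blast

lemma le_lv: "x \<in> vars F \<Longrightarrow> x \<le> lv F"
  unfolding lv_def using finite_vars Max_ge by blast

lemma subgraph_antisym: "subgraph G H \<Longrightarrow> subgraph H G \<Longrightarrow> G = H"
  unfolding subgraph_def by (auto simp: prod_eq_iff)

lemma is_clique_subset: "is_clique G S \<Longrightarrow> R \<subseteq> S \<Longrightarrow> is_clique G R"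
  unfolding is_clique_def by blast

lemma supp_set_level_set_subset:
  "supp_set (level_set P i) \<subseteq> {i} \<union> {u \<in> fst (assoc_graph P). {u, i} \<in> snd (assoc_graph P) \<and> u < i}"
proof
  fix u assume "u \<in> supp_set (level_set P i)"
  then obtain F where F: "F \<in> P" "nonconstant F" "lv F = i" "u \<in> vars F"
    unfolding supp_set_def level_set_def by auto
  have "i \<in> vars F" using F lv_in_vars by metis
  moreover have "u \<le> i" using F le_lv by metis
  ultimately show "u \<in> {i} \<union> {u \<in> fst (assoc_graph P). {u, i} \<in> snd (assoc_graph P) \<and> u < i}"
    using F unfolding assoc_graph_def supp_set_def by (cases "u = i") force+
qed

lemma is_clique_supp_level_set:
  assumes "chordal_peo P" and "level_set P i \<noteq> {}"
  shows "is_clique (assoc_graph P) (supp_set (level_set P i))"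
proof -
  obtain F where "F \<in> level_set P i" using assms(2) by blast
  then have "i \<in> fst (assoc_graph P)"
    using lv_in_vars unfolding level_set_def assoc_graph_def supp_set_def by fastforce
  then have "is_clique (assoc_graph P)
      ({i} \<union> {u \<in> fst (assoc_graph P). {u, i} \<in> snd (assoc_graph P) \<and> u < i})"
    using assms(1) unfolding chordal_peo_def is_peo_def by blast
  then show ?thesis using is_clique_subset supp_set_level_set_subset by blast
qed

lemma supp_level_set_subset_supp_set: "supp_set (level_set P i) \<subseteq> supp_set P"
  unfolding supp_set_def level_set_def by auto

lemma subgraph_assoc_graph_if_cliques:
  assumes "\<And>G. G \<in> Q \<Longrightarrow> vars G \<subseteq> supp_set P \<and> is_clique (assoc_graph P) (vars G)"
  shows "subgraph (assoc_graph Q) (assoc_graph P)"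
  using assms unfolding subgraph_def is_clique_def
  by (auto simp: assoc_graph_def supp_set_def[of Q])

lemma subgraph_assoc_graph_if_covered:
  assumes "\<And>F. F \<in> P \<Longrightarrow> nonconstant F \<Longrightarrow> \<exists>G \<in> Q. vars F \<subseteq> vars G"
  shows "subgraph (assoc_graph P) (assoc_graph Q)"
proof -
  have "\<exists>G \<in> Q. vars F \<subseteq> vars G" if "F \<in> P" "x \<in> vars F" for F x
    using assms that unfolding nonconstant_def by blast
  then show ?thesis
    unfolding subgraph_def assoc_graph_def supp_set_def by fastforce
qed

lemma triangular_set_map_lv:
  assumes "sorted_wrt (<) L" and "\<And>i. i \<in> set L \<Longrightarrow> nonconstant (T i) \<and> lv (T i) = i"
  shows "triangular_set (map T L)"
proof -
  have "sorted_wrt (\<lambda>i j. lv (T i) < lv (T j)) L"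
    using sorted_wrt_mono_rel[OF _ assms(1), of "\<lambda>i j. lv (T i) < lv (T j)"] assms(2) by auto
  then show ?thesis
    using assms(2) unfolding triangular_set_def by (auto simp: sorted_wrt_map)
qed

theorem proposition3p1:
  fixes P :: "'a::field mpoly set" and n :: nat and T :: "nat \<Rightarrow> 'a mpoly"
  assumes P_ring: "\<forall>F \<in> P. vars F \<subseteq> {1..n}"
    and chordal: "chordal_peo P"
    and T_ring: "\<forall>i \<in> {1..n}. level_set P i \<noteq> {} \<longrightarrow> vars (T i) \<subseteq> {1..n}"
    and T_nc: "\<forall>i \<in> {1..n}. level_set P i \<noteq> {} \<longrightarrow> nonconstant (T i) \<and> lv (T i) = i"
    and T_supp: "\<forall>i \<in> {1..n}. level_set P i \<noteq> {} \<longrightarrow> vars (T i) \<subseteq> supp_set (level_set P i)"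
  shows "triangular_set (map T (filter (\<lambda>i. level_set P i \<noteq> {}) [1..<Suc n]))
    \<and> subgraph (assoc_graph (set (map T (filter (\<lambda>i. level_set P i \<noteq> {}) [1..<Suc n]))))
               (assoc_graph P)
    \<and> ((\<forall>i \<in> {1..n}. level_set P i \<noteq> {} \<longrightarrow> vars (T i) = supp_set (level_set P i))
       \<longrightarrow> assoc_graph (set (map T (filter (\<lambda>i. level_set P i \<noteq> {}) [1..<Suc n])))
           = assoc_graph P)"
proof -
  define L where "L = filter (\<lambda>i. level_set P i \<noteq> {}) [1..<Suc n]"
  have set_L: "set L = {i \<in> {1..n}. level_set P i \<noteq> {}}"
    unfolding L_def by auto
  have "sorted_wrt (<) L"
    unfolding L_def by (intro sorted_wrt_filter) (rule sorted_wrt_upt)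
  then have "triangular_set (map T L)"
    using T_nc set_L by (intro triangular_set_map_lv) auto
  moreover have sub: "subgraph (assoc_graph (set (map T L))) (assoc_graph P)"
    using T_supp set_L is_clique_supp_level_set[OF chordal] supp_level_set_subset_supp_set
    by (intro subgraph_assoc_graph_if_cliques) (force intro: is_clique_subset)
  moreover have "assoc_graph (set (map T L)) = assoc_graph P"
    if T_eq: "\<forall>i \<in> {1..n}. level_set P i \<noteq> {} \<longrightarrow> vars (T i) = supp_set (level_set P i)"
  proof (intro subgraph_antisym[OF sub] subgraph_assoc_graph_if_covered)
    fix F assume F: "F \<in> P" "nonconstant F"
    then have "lv F \<in> {1..n}" and "F \<in> level_set P (lv F)"
      using lv_in_vars[OF F(2)] P_ring unfolding level_set_def by blast+
    then show "\<exists>G \<in> set (map T L). vars F \<subseteq> vars G"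
      using T_eq set_L unfolding supp_set_def by (auto 4 3)
  qed
  ultimately show ?thesis unfolding L_def by blast
qed

end
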